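(* Let $\rho$ be a 2-qubit pure state whose Bloch representation has the form $\boldsymbol{\alpha}=O_1(\mu,0,0)^T$, $\boldsymbol{\beta}=O_2(\mu,0,0)^T$, $C=O_1\,\mathrm{diag}(1,\sin\theta,-\sin\theta)\,O_2^T$, with $\theta\in[0,\pi/2]$, $\mu=\cos\theta$, $O_1,O_2\in SO(3)$, and suppose $|\mu|\in(0,1)$. Then $I_{\chi^2,post}(\rho)<2$.
   Context: Let $\sigma_1,\sigma_2,\sigma_3$ be the Pauli matrices. For a 2-qubit density matrix $\rho$ its Bloch vector is $(b_1,\dots,b_{16})$, where $b_1=1$; $(b_2,b_3,b_4)=\boldsymbol{\alpha}$ with $\alpha_j=\operatorname{tr}((\sigma_j\otimes I)\rho)$; $(b_5,b_6,b_7)=\boldsymbol{\beta}$ with $\beta_j=\operatorname{tr}((I\otimes\sigma_j)\rho)$; and $(b_8,\dots,b_{16})$ are the entries $C_{jk}=\operatorname{tr}((\sigma_j\otimes\sigma_k)\rho)$ of the $3\times3$ matrix $C$ in row-major order. Every 2-qubit pure state has a Bloch representation of the displayed form. For $b\in[-1,1]$ and $h\in(-1,1)$, $D_{\chi^2}(b,h)=\frac{((b+1)/2)^2}{(h+1)/2}+\frac{((1-b)/2)^2}{(1-h)/2}-1$; if $h=\pm1$ and $b=h$, set $D_{\chi^2}(b,h)=0$. The posterior information content of a pure state with Bloch vector $(b_1,\dots,b_{16})$ is defined as follows. For $i=2,\dots,16$, let $b_i^{max}$ and $b_i^{min}$ be the maximum and the minimum of the $i$-th Bloch component over all 2-qubit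 pure states whose components $1,\dots,i-1$ equal $b_1,\dots,b_{i-1}$, and let $h_i=(b_i^{max}+b_i^{min})/2$. Then $I_{\chi^2,post}=\sum_{i=2}^{16}D_{\chi^2}(b_i,h_i)$. *)

theory Defs
  imports "HOL-Analysis.Analysis"
begin

definition pauli :: "nat \<Rightarrow> nat \<Rightarrow> nat \<Rightarrow> complex" where
  "pauli j r s =
     (if j = 0 then (if r = s then 1 else 0)
      else if j = 1 then (if r \<noteq> s then 1 else 0)
      else if j = 2 then (if r = 0 \<and> s = 1 then - \<i> else if r = 1 \<and> s = 0 then \<i> else 0)
      else (if r = s then (if r = 0 then 1 else -1) else 0))"

(* tensor product A \<otimes> B of 2x2 matrices, basis |ab> at index 2a+b *)
definition tensor2 :: "(nat \<Rightarrow> nat \<Rightarrow> complex) \<Rightarrow> (nat \<Rightarrow> nat \<Rightarrow> complex) \<Rightarrow> nat \<Rightarrow> nat \<Rightarrow> complex" where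
  "tensor2 A B r s = A (r div 2) (s div 2) * B (r mod 2) (s mod 2)"

definition pure_state :: "(nat \<Rightarrow> complex) \<Rightarrow> bool" where
  "pure_state \<psi> \<longleftrightarrow> (\<Sum>r<4. (cmod (\<psi> r))\<^sup>2) = 1"

definition dens :: "(nat \<Rightarrow> complex) \<Rightarrow> nat \<Rightarrow> nat \<Rightarrow> complex" where
  "dens \<psi> r s = \<psi> r * cnj (\<psi> s)"

definition trace4 :: "(nat \<Rightarrow> nat \<Rightarrow> complex) \<Rightarrow> complex" where
  "trace4 M = (\<Sum>r<4. M r r)"

definition mmult4 :: "(nat \<Rightarrow> nat \<Rightarrow> complex) \<Rightarrow> (nat \<Rightarrow> nat \<Rightarrow> complex) \<Rightarrow> nat \<Rightarrow> nat \<Rightarrow> complex" where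
  "mmult4 M N r s = (\<Sum>t<4. M r t * N t s)"

(* tr((sigma_j \<otimes> sigma_k) rho), a real number; we take its real part *)
definition pauli_exp :: "(nat \<Rightarrow> complex) \<Rightarrow> nat \<Rightarrow> nat \<Rightarrow> real" where
  "pauli_exp \<psi> j k = Re (trace4 (mmult4 (tensor2 (pauli j) (pauli k)) (dens \<psi>)))"

(* index i = 1..16 of the Bloch vector to the Pauli pair (j,k) *)
definition bloch_idx :: "nat \<Rightarrow> nat \<times> nat" where
  "bloch_idx i =
     (if i \<le> 1 then (0, 0)
      else if i \<le> 4 then (i - 1, 0)
      else if i \<le> 7 then (0, i - 4)
      else ((i - 8) div 3 + 1, (i - 8) mod 3 + 1))"

definition bloch :: "(nat \<Rightarrow> complex) \<Rightarrow> nat \<Rightarrow> real" where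
  "bloch \<psi> i = pauli_exp \<psi> (fst (bloch_idx i)) (snd (bloch_idx i))"

definition alpha_vec :: "(nat \<Rightarrow> complex) \<Rightarrow> real^3" where
  "alpha_vec \<psi> = vector [bloch \<psi> 2, bloch \<psi> 3, bloch \<psi> 4]"

definition beta_vec :: "(nat \<Rightarrow> complex) \<Rightarrow> real^3" where
  "beta_vec \<psi> = vector [bloch \<psi> 5, bloch \<psi> 6, bloch \<psi> 7]"

definition corr_mat :: "(nat \<Rightarrow> complex) \<Rightarrow> real^3^3" where
  "corr_mat \<psi> = vector [vector [bloch \<psi> 8, bloch \<psi> 9, bloch \<psi> 10],
                          vector [bloch \<psi> 11, bloch \<psi> 12, bloch \<psi> 13],
                          vector [bloch \<psi> 14, bloch \<psi> 15, bloch \<psi> 16]]"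

definition diag3 :: "real \<Rightarrow> real \<Rightarrow> real \<Rightarrow> real^3^3" where
  "diag3 a b c = vector [vector [a, 0, 0], vector [0, b, 0], vector [0, 0, c]]"

definition D_chi2 :: "real \<Rightarrow> real \<Rightarrow> real" where
  "D_chi2 b h =
     (if (h = 1 \<or> h = -1) \<and> b = h then 0
      else ((b + 1) / 2)\<^sup>2 / ((h + 1) / 2) + ((1 - b) / 2)\<^sup>2 / ((1 - h) / 2) - 1)"

definition cond_vals :: "(nat \<Rightarrow> real) \<Rightarrow> nat \<Rightarrow> real set" where
  "cond_vals b i = {bloch \<phi> i | \<phi>. pure_state \<phi> \<and> (\<forall>j\<in>{1..<i}. bloch \<phi> j = b j)}"

definition b_max :: "(nat \<Rightarrow> real) \<Rightarrow> nat \<Rightarrow> real" where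
  "b_max b i = Sup (cond_vals b i)"

definition b_min :: "(nat \<Rightarrow> real) \<Rightarrow> nat \<Rightarrow> real" where
  "b_min b i = Inf (cond_vals b i)"

definition h_mid :: "(nat \<Rightarrow> real) \<Rightarrow> nat \<Rightarrow> real" where
  "h_mid b i = (b_max b i + b_min b i) / 2"

definition I_chi2_post :: "(nat \<Rightarrow> real) \<Rightarrow> real" where
  "I_chi2_post b = (\<Sum>i=2..16. D_chi2 (b i) (h_mid b i))"

end

(*
  For i = 2, ..., 6 a local Pauli operator, possibly followed by complex conjugation, negates
  the i-th Bloch component while fixing the earlier ones; so the conditional range of b_i is
  symmetric about 0 and its term is b_i^2. For i = 7 the identity |alpha| = |beta| leaves only
  the values +-b_7. The local components thus contribute at most |alpha|^2 + |beta|^2 = 2 mu^2.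

  Once alpha = mu O1 e_1 and beta = mu O2 e_1 are fixed, purity forces
  C = O1 X(p, q) O2^T with X(p, q) = [[1, 0, 0], [0, p, q], [0, q, -p]] and p^2 + q^2 = s^2,
  s = sin theta, the given state being (p, q) = (s, 0). Each correlation component is then an
  affine function A + p U + q V of a point on this circle, and conditioning on the earlier
  components intersects the circle with lines. Up to the first index k with U_k /= 0 the
  reflection ((O1 e_1) . sigma) (x) I, which maps (p, q) to (-p, -q), makes the conditional
  ranges symmetric about the true values. With (U_k, V_k) = r (c, d), the term at k is at most
  s^2 c^2; afterwards only (s, 0) and its mirror image survive, so at most one later term is
  nonzero, and it is at most s^2 d^2. Hence the total is at most 2 mu^2 + s^2 = 1 + mu^2 < 2.
*)
theory Submission
  imports Defs
begin

section \<open>Bloch coordinates of two-qubit states\<close>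

lemma sum_lessThan_4: "(\<Sum>r<(4::nat). f r) = f 0 + f 1 + f 2 + (f 3 :: 'a::comm_monoid_add)"
  by (simp add: numeral_eq_Suc lessThan_Suc add_ac)

lemma pauli_exp_eq_sum:
  "pauli_exp \<psi> j k = Re (\<Sum>r<4. \<Sum>t<4. tensor2 (pauli j) (pauli k) r t * \<psi> t * cnj (\<psi> r))"
  unfolding pauli_exp_def trace4_def mmult4_def dens_def by (simp add: sum_distrib_right mult.assoc)

lemma cmod_pauli_le_1: "cmod (pauli j r s) \<le> 1"
  by (simp add: pauli_def)

lemma bloch_bounded:
  assumes "pure_state \<phi>" shows "\<bar>bloch \<phi> i\<bar> \<le> 16"
proof -
  have "cmod (\<phi> r) \<le> 1" if "r < 4" for r
  proof -
    have "(cmod (\<phi> r))\<^sup>2 \<le> (\<Sum>r<4. (cmod (\<phi> r))\<^sup>2)"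
      using that by (intro member_le_sum) auto
    then show ?thesis using assms unfolding pure_state_def by (simp add: power_le_one_iff abs_square_le_1)
  qed
  then have entry: "cmod (tensor2 (pauli j) (pauli k) r t * \<phi> t * cnj (\<phi> r)) \<le> 1"
    if "r < 4" "t < 4" for j k r t
    using that unfolding tensor2_def norm_mult complex_mod_cnj
    by (intro mult_le_one cmod_pauli_le_1) auto
  have "\<bar>bloch \<phi> i\<bar> \<le> cmod (\<Sum>r<4. \<Sum>t<4. tensor2 (pauli (fst (bloch_idx i))) (pauli (snd (bloch_idx i))) r t * \<phi> t * cnj (\<phi> r))"
    unfolding bloch_def pauli_exp_eq_sum by (rule abs_Re_le_cmod)
  also have "\<dots> \<le> (\<Sum>r<(4::nat). \<Sum>t<(4::nat). (1::real))"
    by (intro norm_sum[THEN order_trans] sum_mono norm_sum[THEN order_trans] entry) auto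
  finally show ?thesis by simp
qed

lemma bloch_coordinates:
  shows "bloch \<phi> 1 = (Re (\<phi> 0))\<^sup>2 + (Re (\<phi> 1))\<^sup>2 + (Re (\<phi> 2))\<^sup>2 + (Re (\<phi> 3))\<^sup>2
        + (Im (\<phi> 0))\<^sup>2 + (Im (\<phi> 1))\<^sup>2 + (Im (\<phi> 2))\<^sup>2 + (Im (\<phi> 3))\<^sup>2"
    and "bloch \<phi> 2 = 2 * Re (\<phi> 0) * Re (\<phi> 2) + 2 * Re (\<phi> 1) * Re (\<phi> 3)
        + 2 * Im (\<phi> 0) * Im (\<phi> 2) + 2 * Im (\<phi> 1) * Im (\<phi> 3)"
    and "bloch \<phi> 3 = 2 * Re (\<phi> 0) * Im (\<phi> 2) + 2 * Re (\<phi> 1) * Im (\<phi> 3)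
        - 2 * Re (\<phi> 2) * Im (\<phi> 0) - 2 * Re (\<phi> 3) * Im (\<phi> 1)"
    and "bloch \<phi> 4 = (Re (\<phi> 0))\<^sup>2 + (Re (\<phi> 1))\<^sup>2 - (Re (\<phi> 2))\<^sup>2 - (Re (\<phi> 3))\<^sup>2
        + (Im (\<phi> 0))\<^sup>2 + (Im (\<phi> 1))\<^sup>2 - (Im (\<phi> 2))\<^sup>2 - (Im (\<phi> 3))\<^sup>2"
    and "bloch \<phi> 5 = 2 * Re (\<phi> 0) * Re (\<phi> 1) + 2 * Re (\<phi> 2) * Re (\<phi> 3)
        + 2 * Im (\<phi> 0) * Im (\<phi> 1) + 2 * Im (\<phi> 2) * Im (\<phi> 3)"
    and "bloch \<phi> 6 = 2 * Re (\<phi> 0) * Im (\<phi> 1) - 2 * Re (\<phi> 1) * Im (\<phi> 0)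
        + 2 * Re (\<phi> 2) * Im (\<phi> 3) - 2 * Re (\<phi> 3) * Im (\<phi> 2)"
    and "bloch \<phi> 7 = (Re (\<phi> 0))\<^sup>2 - (Re (\<phi> 1))\<^sup>2 + (Re (\<phi> 2))\<^sup>2 - (Re (\<phi> 3))\<^sup>2
        + (Im (\<phi> 0))\<^sup>2 - (Im (\<phi> 1))\<^sup>2 + (Im (\<phi> 2))\<^sup>2 - (Im (\<phi> 3))\<^sup>2"
    and "bloch \<phi> 8 = 2 * Re (\<phi> 0) * Re (\<phi> 3) + 2 * Re (\<phi> 1) * Re (\<phi> 2)
        + 2 * Im (\<phi> 0) * Im (\<phi> 3) + 2 * Im (\<phi> 1) * Im (\<phi> 2)"
    and "bloch \<phi> 9 = 2 * Re (\<phi> 0) * Im (\<phi> 3) - 2 * Re (\<phi> 1) * Im (\<phi> 2)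
        + 2 * Re (\<phi> 2) * Im (\<phi> 1) - 2 * Re (\<phi> 3) * Im (\<phi> 0)"
    and "bloch \<phi> 10 = 2 * Re (\<phi> 0) * Re (\<phi> 2) - 2 * Re (\<phi> 1) * Re (\<phi> 3)
        + 2 * Im (\<phi> 0) * Im (\<phi> 2) - 2 * Im (\<phi> 1) * Im (\<phi> 3)"
    and "bloch \<phi> 11 = 2 * Re (\<phi> 0) * Im (\<phi> 3) + 2 * Re (\<phi> 1) * Im (\<phi> 2)
        - 2 * Re (\<phi> 2) * Im (\<phi> 1) - 2 * Re (\<phi> 3) * Im (\<phi> 0)"
    and "bloch \<phi> 12 = - 2 * Re (\<phi> 0) * Re (\<phi> 3) + 2 * Re (\<phi> 1) * Re (\<phi> 2)
        - 2 * Im (\<phi> 0) * Im (\<phi> 3) + 2 * Im (\<phi> 1) * Im (\<phi> 2)"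
    and "bloch \<phi> 13 = 2 * Re (\<phi> 0) * Im (\<phi> 2) - 2 * Re (\<phi> 1) * Im (\<phi> 3)
        - 2 * Re (\<phi> 2) * Im (\<phi> 0) + 2 * Re (\<phi> 3) * Im (\<phi> 1)"
    and "bloch \<phi> 14 = 2 * Re (\<phi> 0) * Re (\<phi> 1) - 2 * Re (\<phi> 2) * Re (\<phi> 3)
        + 2 * Im (\<phi> 0) * Im (\<phi> 1) - 2 * Im (\<phi> 2) * Im (\<phi> 3)"
    and "bloch \<phi> 15 = 2 * Re (\<phi> 0) * Im (\<phi> 1) - 2 * Re (\<phi> 1) * Im (\<phi> 0)
        - 2 * Re (\<phi> 2) * Im (\<phi> 3) + 2 * Re (\<phi> 3) * Im (\<phi> 2)"
    and "bloch \<phi> 16 = (Re (\<phi> 0))\<^sup>2 - (Re (\<phi> 1))\<^sup>2 - (Re (\<phi> 2))\<^sup>2 + (Re (\<phi> 3))\<^sup>2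
        + (Im (\<phi> 0))\<^sup>2 - (Im (\<phi> 1))\<^sup>2 - (Im (\<phi> 2))\<^sup>2 + (Im (\<phi> 3))\<^sup>2"
  unfolding bloch_def bloch_idx_def pauli_exp_eq_sum sum_lessThan_4 tensor2_def pauli_def
  by (simp_all add: algebra_simps power2_eq_square)

lemma pure_state_iff_bloch_1: "pure_state \<phi> \<longleftrightarrow> bloch \<phi> 1 = 1"
  unfolding pure_state_def sum_lessThan_4 cmod_power2 bloch_coordinates(1)
  by (simp add: power2_eq_square add_ac)

section \<open>Identities for the Bloch vector of a pure state\<close>

definition outer_prod :: "real^'n \<Rightarrow> real^'m \<Rightarrow> real^'m^'n" where
  "outer_prod u v = (\<chi> j k. u$j * v$k)"

lemma alpha_inner_eq_beta_inner: "alpha_vec \<phi> \<bullet> alpha_vec \<phi> = beta_vec \<phi> \<bullet> beta_vec \<phi>"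
  unfolding alpha_vec_def beta_vec_def inner_vec_def sum_3 bloch_coordinates
  by simp algebra

lemma transpose_corr_mat_mult_alpha:
  "transpose (corr_mat \<phi>) *v alpha_vec \<phi> = bloch \<phi> 1 *\<^sub>R beta_vec \<phi>"
  unfolding vec_eq_iff forall_3 corr_mat_def alpha_vec_def beta_vec_def bloch_coordinates
  by (simp add: matrix_vector_mult_def sum_3 transpose_def; intro conjI; algebra)

lemma corr_mat_mult_beta: "corr_mat \<phi> *v beta_vec \<phi> = bloch \<phi> 1 *\<^sub>R alpha_vec \<phi>"
  unfolding vec_eq_iff forall_3 corr_mat_def alpha_vec_def beta_vec_def bloch_coordinates
  by (simp add: matrix_vector_mult_def sum_3; intro conjI; algebra)

lemma corr_mat_mult_transpose:
  "corr_mat \<phi> ** transpose (corr_mat \<phi>) =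
     ((bloch \<phi> 1)\<^sup>2 - alpha_vec \<phi> \<bullet> alpha_vec \<phi>) *\<^sub>R mat 1 + outer_prod (alpha_vec \<phi>) (alpha_vec \<phi>)"
  unfolding vec_eq_iff forall_3 corr_mat_def alpha_vec_def outer_prod_def bloch_coordinates
  by (simp add: matrix_matrix_mult_def sum_3 transpose_def inner_vec_def mat_def; intro conjI; algebra)

lemma det_corr_mat:
  "det (corr_mat \<phi>) = - ((bloch \<phi> 1)\<^sup>2 - alpha_vec \<phi> \<bullet> alpha_vec \<phi>) * bloch \<phi> 1"
  unfolding det_3 corr_mat_def alpha_vec_def inner_vec_def sum_3 bloch_coordinates
  by simp algebra

(* pauli_first n \<phi> is ((n1 \<sigma>1 + n2 \<sigma>2 + n3 \<sigma>3) \<otimes> I) \<phi>. *)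
definition pauli_first :: "real^3 \<Rightarrow> (nat \<Rightarrow> complex) \<Rightarrow> nat \<Rightarrow> complex" where
  "pauli_first n \<phi> r =
     (let z = complex_of_real (n$1) + \<i> * complex_of_real (n$2); c = complex_of_real (n$3) in
      if r = 0 then c * \<phi> 0 + cnj z * \<phi> 2
      else if r = 1 then c * \<phi> 1 + cnj z * \<phi> 3
      else if r = 2 then z * \<phi> 0 - c * \<phi> 2
      else z * \<phi> 1 - c * \<phi> 3)"

lemma bloch_pauli_first_1: "bloch (pauli_first n \<phi>) 1 = (n \<bullet> n) * bloch \<phi> 1"
  unfolding bloch_coordinates inner_vec_def sum_3
  by (simp add: pauli_first_def) algebra

lemma alpha_vec_pauli_first:
  "alpha_vec (pauli_first n \<phi>) = (2 * (n \<bullet> alpha_vec \<phi>)) *\<^sub>R n - (n \<bullet> n) *\<^sub>R alpha_vec \<phi>"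
  unfolding vec_eq_iff forall_3 alpha_vec_def inner_vec_def sum_3 bloch_coordinates
  by (simp add: pauli_first_def; intro conjI; algebra)

lemma beta_vec_pauli_first: "beta_vec (pauli_first n \<phi>) = (n \<bullet> n) *\<^sub>R beta_vec \<phi>"
  unfolding vec_eq_iff forall_3 beta_vec_def inner_vec_def sum_3 bloch_coordinates
  by (simp add: pauli_first_def; intro conjI; algebra)

lemma corr_mat_pauli_first:
  "corr_mat (pauli_first n \<phi>) =
     2 *\<^sub>R outer_prod n (transpose (corr_mat \<phi>) *v n) - (n \<bullet> n) *\<^sub>R corr_mat \<phi>"
  unfolding vec_eq_iff forall_3 corr_mat_def outer_prod_def inner_vec_def sum_3 bloch_coordinates
  by (simp add: pauli_first_def matrix_vector_mult_def transpose_def sum_3; intro conjI; algebra)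

lemma D_chi2_self: "D_chi2 b b = 0"
proof (cases "b = 1 \<or> b = -1")
  case False
  have square_div: "x\<^sup>2 / x = x" if "x \<noteq> 0" for x :: real
    using that by (simp add: power2_eq_square)
  from False have "D_chi2 b b = ((b + 1) / 2)\<^sup>2 / ((b + 1) / 2) + ((1 - b) / 2)\<^sup>2 / ((1 - b) / 2) - 1"
    by (simp add: D_chi2_def)
  also have "\<dots> = 0"
    using False by (subst (1 2) square_div) (auto simp: field_simps)
  finally show ?thesis .
qed (auto simp: D_chi2_def)

lemma D_chi2_eq:
  assumes "\<bar>h\<bar> < 1" shows "D_chi2 b h = (b - h)\<^sup>2 / (1 - h\<^sup>2)"
proof -
  have "h + 1 \<noteq> 0" "1 - h \<noteq> 0" "1 - h\<^sup>2 \<noteq> 0"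
    using assms abs_square_less_1[of h] by auto
  with assms show ?thesis by (auto simp: D_chi2_def power2_eq_square field_simps)
qed

lemma Sup_Inf_midpoint_eq_center:
  fixes S :: "real set"
  assumes "S \<noteq> {}" "bdd_above S" and reflect: "\<And>x. x \<in> S \<Longrightarrow> 2 * c - x \<in> S"
  shows "(Sup S + Inf S) / 2 = c"
proof -
  have "Inf S = 2 * c - Sup S"
  proof (rule cInf_eq_non_empty)
    fix x assume "x \<in> S"
    then show "2 * c - Sup S \<le> x" using reflect cSup_upper[OF _ assms(2)] by fastforce
  next
    fix z assume "\<And>x. x \<in> S \<Longrightarrow> z \<le> x"
    then have "Sup S \<le> 2 * c - z" using reflect by (intro cSup_least[OF assms(1)]) fastforce
    then show "z \<le> 2 * c - Sup S" by linarith
  qed fact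
  then show ?thesis by simp
qed

lemma D_chi2_Sup_Inf_midpoint_singleton:
  fixes S :: "real set"
  assumes "y \<in> S" "S \<subseteq> {y}" shows "D_chi2 y ((Sup S + Inf S) / 2) = 0"
  proof -
  have "S = {y}" using assms by auto
  then show ?thesis by (simp add: D_chi2_self)
qed

lemma D_chi2_Sup_Inf_midpoint_doubleton:
  fixes S :: "real set"
  assumes "y \<in> S" "S \<subseteq> {y, w}" "\<bar>(y + w) / 2\<bar> < 1"
  shows "D_chi2 y ((Sup S + Inf S) / 2) \<le> ((y - w) / 2)\<^sup>2 / (1 - ((y + w) / 2)\<^sup>2)"
proof (cases "S = {y, w}")
  case True
  then have midpoint: "(Sup S + Inf S) / 2 = (y + w) / 2"
    by (simp add: cSup_insert cInf_insert sup_max inf_min)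
  have "y - (y + w) / 2 = (y - w) / 2" by (simp add: field_simps)
  then show ?thesis unfolding midpoint D_chi2_eq[OF assms(3)] by (simp only: order_refl)
next
  case False
  with assms(1,2) have "S \<subseteq> {y}" by auto
  moreover have "0 < 1 - ((y + w) / 2)\<^sup>2" using assms(3) by (simp add: abs_square_less_1)
  ultimately show ?thesis using D_chi2_Sup_Inf_midpoint_singleton[OF assms(1)] by simp
qed

section \<open>The local Bloch vectors\<close>

lemma bloch_mem_cond_vals: "pure_state \<psi> \<Longrightarrow> bloch \<psi> i \<in> cond_vals (bloch \<psi>) i"
  unfolding cond_vals_def by auto

lemma bdd_above_cond_vals: "bdd_above (cond_vals b i)"
proof (rule bdd_aboveI)
  fix x assume "x \<in> cond_vals b i"
  then obtain \<phi> where "pure_state \<phi>" "x = bloch \<phi> i" unfolding cond_vals_def by blast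
  then show "x \<le> 16" using bloch_bounded[of \<phi> i] by simp
qed

lemma reflect_mem_cond_vals:
  assumes reflect: "\<And>\<phi>. pure_state \<phi> \<Longrightarrow> \<forall>j\<in>{1..<i}. bloch \<phi> j = b j \<Longrightarrow>
      pure_state (M \<phi>) \<and> (\<forall>j\<in>{1..<i}. bloch (M \<phi>) j = b j) \<and> bloch (M \<phi>) i = 2 * c - bloch \<phi> i"
    and "x \<in> cond_vals b i"
  shows "2 * c - x \<in> cond_vals b i"
proof -
  from assms(2) obtain \<phi> where \<phi>: "pure_state \<phi>" "\<forall>j\<in>{1..<i}. bloch \<phi> j = b j"
    and x: "x = bloch \<phi> i"
    unfolding cond_vals_def by blast
  from reflect[OF \<phi>] have "bloch (M \<phi>) i \<in> cond_vals b i"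
    unfolding cond_vals_def by blast
  with reflect[OF \<phi>] x show ?thesis by simp
qed

lemma D_chi2_post_eq_square_if_antisymmetric:
  assumes "pure_state \<psi>" "1 < i"
    and keep: "\<And>\<phi> j. j \<in> {1..<i} \<Longrightarrow> bloch (M \<phi>) j = bloch \<phi> j"
    and flip: "\<And>\<phi>. bloch (M \<phi>) i = - bloch \<phi> i"
  shows "D_chi2 (bloch \<psi> i) (h_mid (bloch \<psi>) i) = (bloch \<psi> i)\<^sup>2"
proof -
  have "2 * 0 - x \<in> cond_vals (bloch \<psi>) i" if "x \<in> cond_vals (bloch \<psi>) i" for x
  proof (rule reflect_mem_cond_vals[OF _ that])
    fix \<phi> assume "pure_state \<phi>" "\<forall>j\<in>{1..<i}. bloch \<phi> j = bloch \<psi> j"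
    moreover have "bloch (M \<phi>) 1 = bloch \<phi> 1" using keep \<open>1 < i\<close> by simp
    ultimately show "pure_state (M \<phi>) \<and> (\<forall>j\<in>{1..<i}. bloch (M \<phi>) j = bloch \<psi> j) \<and>
        bloch (M \<phi>) i = 2 * 0 - bloch \<phi> i"
      using keep[of _ \<phi>] flip[of \<phi>] unfolding pure_state_iff_bloch_1 by auto
  qed
  then have "h_mid (bloch \<psi>) i = 0"
    unfolding h_mid_def b_max_def b_min_def
    using bloch_mem_cond_vals[OF assms(1), of i] bdd_above_cond_vals
    by (intro Sup_Inf_midpoint_eq_center) blast+
  then show ?thesis using D_chi2_eq[of 0] by simp
qed

(* With complex conjugation, these negate the components 2, ..., 6 one at a time, fixing the earlier ones. *)
definition sigma_z_first :: "(nat \<Rightarrow> complex) \<Rightarrow> nat \<Rightarrow> complex" where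
  "sigma_z_first \<phi> r = (if r < 2 then \<phi> r else - \<phi> r)"

definition sigma_x_first :: "(nat \<Rightarrow> complex) \<Rightarrow> nat \<Rightarrow> complex" where
  "sigma_x_first \<phi> r = (if r = 0 then \<phi> 2 else if r = 1 then \<phi> 3 else if r = 2 then \<phi> 0 else \<phi> 1)"

definition sigma_z_second :: "(nat \<Rightarrow> complex) \<Rightarrow> nat \<Rightarrow> complex" where
  "sigma_z_second \<phi> r = (if even r then \<phi> r else - \<phi> r)"

definition sigma_x_second :: "(nat \<Rightarrow> complex) \<Rightarrow> nat \<Rightarrow> complex" where
  "sigma_x_second \<phi> r = (if r = 0 then \<phi> 1 else if r = 1 then \<phi> 0 else if r = 2 then \<phi> 3 else \<phi> 2)"

lemma bloch_sigma_z_first: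
  "bloch (sigma_z_first \<phi>) 1 = bloch \<phi> 1" "bloch (sigma_z_first \<phi>) 2 = - bloch \<phi> 2"
  unfolding bloch_coordinates sigma_z_first_def by simp_all

lemma bloch_sigma_x_first:
  "bloch (sigma_x_first \<phi>) 1 = bloch \<phi> 1" "bloch (sigma_x_first \<phi>) 2 = bloch \<phi> 2"
  "bloch (sigma_x_first \<phi>) 3 = - bloch \<phi> 3" "bloch (sigma_x_first \<phi>) 4 = - bloch \<phi> 4"
  unfolding bloch_coordinates sigma_x_first_def by (simp_all add: algebra_simps)

lemma bloch_cnj:
  "bloch (cnj \<circ> \<phi>) 1 = bloch \<phi> 1" "bloch (cnj \<circ> \<phi>) 2 = bloch \<phi> 2"
  "bloch (cnj \<circ> \<phi>) 3 = - bloch \<phi> 3" "bloch (cnj \<circ> \<phi>) 4 = bloch \<phi> 4"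
  unfolding bloch_coordinates by (simp_all add: algebra_simps)

lemma bloch_sigma_z_second:
  "bloch (sigma_z_second \<phi>) 1 = bloch \<phi> 1" "bloch (sigma_z_second \<phi>) 2 = bloch \<phi> 2"
  "bloch (sigma_z_second \<phi>) 3 = bloch \<phi> 3" "bloch (sigma_z_second \<phi>) 4 = bloch \<phi> 4"
  "bloch (sigma_z_second \<phi>) 5 = - bloch \<phi> 5"
  unfolding bloch_coordinates sigma_z_second_def by (simp_all add: algebra_simps)

lemma bloch_sigma_x_second:
  "bloch (sigma_x_second \<phi>) 1 = bloch \<phi> 1" "bloch (sigma_x_second \<phi>) 2 = bloch \<phi> 2"
  "bloch (sigma_x_second \<phi>) 3 = bloch \<phi> 3" "bloch (sigma_x_second \<phi>) 4 = bloch \<phi> 4"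
  "bloch (sigma_x_second \<phi>) 5 = bloch \<phi> 5" "bloch (sigma_x_second \<phi>) 6 = - bloch \<phi> 6"
  unfolding bloch_coordinates sigma_x_second_def by (simp_all add: algebra_simps)

(* Since |alpha| = |beta|, the earlier components leave only the two values +-b_7. *)
lemma D_chi2_post_7_le:
  assumes "pure_state \<psi>"
  shows "D_chi2 (bloch \<psi> 7) (h_mid (bloch \<psi>) 7) \<le> (bloch \<psi> 7)\<^sup>2"
proof -
  have "cond_vals (bloch \<psi>) 7 \<subseteq> {bloch \<psi> 7, - bloch \<psi> 7}"
  proof
    fix x assume "x \<in> cond_vals (bloch \<psi>) 7"
    then obtain \<phi> where "\<forall>j\<in>{1..<7}. bloch \<phi> j = bloch \<psi> j" "x = bloch \<phi> 7"
      unfolding cond_vals_def by blast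
    moreover have "alpha_vec \<phi> \<bullet> alpha_vec \<phi> = beta_vec \<phi> \<bullet> beta_vec \<phi>"
      "alpha_vec \<psi> \<bullet> alpha_vec \<psi> = beta_vec \<psi> \<bullet> beta_vec \<psi>"
      by (rule alpha_inner_eq_beta_inner)+
    ultimately have "x\<^sup>2 = (bloch \<psi> 7)\<^sup>2"
      by (simp add: alpha_vec_def beta_vec_def inner_vec_def sum_3 atLeastLessThan_nat_numeral power2_eq_square)
    then show "x \<in> {bloch \<psi> 7, - bloch \<psi> 7}" by (auto simp: power2_eq_iff)
  qed
  then show ?thesis
    unfolding h_mid_def b_max_def b_min_def
    using D_chi2_Sup_Inf_midpoint_doubleton[OF bloch_mem_cond_vals[OF assms]] by fastforce
qed

lemma sum_D_chi2_post_alpha_beta_le: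
  assumes "pure_state \<psi>"
  shows "(\<Sum>i=2..7. D_chi2 (bloch \<psi> i) (h_mid (bloch \<psi>) i))
    \<le> alpha_vec \<psi> \<bullet> alpha_vec \<psi> + beta_vec \<psi> \<bullet> beta_vec \<psi>"
proof -
  note antisymmetric = D_chi2_post_eq_square_if_antisymmetric[OF assms]
  \<comment> \<open>One_nat_def would turn the index 1 into Suc 0, out of reach of the rules below.\<close>
  have ivl: "{1..<2::nat} = {1}" "{1..<3::nat} = {1, 2}" "{1..<4::nat} = {1, 2, 3}"
    "{1..<5::nat} = {1, 2, 3, 4}" "{1..<6::nat} = {1, 2, 3, 4, 5}"
    by auto
  have "D_chi2 (bloch \<psi> 2) (h_mid (bloch \<psi>) 2) = (bloch \<psi> 2)\<^sup>2"
    by (rule antisymmetric[where M = sigma_z_first])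
      (auto simp: ivl bloch_sigma_z_first simp del: atLeastLessThan_iff One_nat_def)
  moreover have "D_chi2 (bloch \<psi> 3) (h_mid (bloch \<psi>) 3) = (bloch \<psi> 3)\<^sup>2"
    by (rule antisymmetric[where M = sigma_x_first])
      (auto simp: ivl bloch_sigma_x_first simp del: atLeastLessThan_iff One_nat_def)
  moreover have "D_chi2 (bloch \<psi> 4) (h_mid (bloch \<psi>) 4) = (bloch \<psi> 4)\<^sup>2"
    by (rule antisymmetric[where M = "\<lambda>\<phi>. cnj \<circ> sigma_x_first \<phi>"])
      (auto simp: ivl bloch_sigma_x_first bloch_cnj simp del: atLeastLessThan_iff One_nat_def)
  moreover have "D_chi2 (bloch \<psi> 5) (h_mid (bloch \<psi>) 5) = (bloch \<psi> 5)\<^sup>2"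
    by (rule antisymmetric[where M = sigma_z_second])
      (auto simp: ivl bloch_sigma_z_second simp del: atLeastLessThan_iff One_nat_def)
  moreover have "D_chi2 (bloch \<psi> 6) (h_mid (bloch \<psi>) 6) = (bloch \<psi> 6)\<^sup>2"
    by (rule antisymmetric[where M = sigma_x_second])
      (auto simp: ivl bloch_sigma_x_second simp del: atLeastLessThan_iff One_nat_def)
  moreover have "{2..7::nat} = {2, 3, 4, 5, 6, 7}" by auto
  ultimately show ?thesis
    using D_chi2_post_7_le[OF assms]
    by (simp add: alpha_vec_def beta_vec_def inner_vec_def sum_3 power2_eq_square)
qed

section \<open>Conditioning a point on a circle\<close>

lemma sum_le_if_at_most_one:
  fixes f :: "'a \<Rightarrow> real"
  assumes "finite I" "0 \<le> c"
    and le: "\<And>i. i \<in> I \<Longrightarrow> f i \<le> (if P i then c else 0)"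
    and unique: "\<And>i j. i \<in> I \<Longrightarrow> j \<in> I \<Longrightarrow> P i \<Longrightarrow> P j \<Longrightarrow> i = j"
  shows "sum f I \<le> c"
proof (cases "\<exists>i\<in>I. P i")
  case True
  then obtain i where i: "i \<in> I" "P i" by blast
  have "f j \<le> (if j = i then c else 0)" if "j \<in> I" for j
    using le[OF that] unique[OF i(1) that i(2)] i(2) by (cases "P j") auto
  then have "sum f I \<le> (\<Sum>j\<in>I. if j = i then c else 0)" by (rule sum_mono)
  also have "\<dots> = c" using i(1) assms(1) by simp
  finally show ?thesis .
next
  case False
  then have "f j \<le> 0" if "j \<in> I" for j using le[OF that] that by auto
  then have "sum f I \<le> (\<Sum>j\<in>I. 0)" by (rule sum_mono)
  then show ?thesis using assms(2) by simp
qed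

lemma circle_line_intersection:
  fixes c d s p q :: real
  assumes "c \<noteq> 0" "c\<^sup>2 + d\<^sup>2 = 1" "p\<^sup>2 + q\<^sup>2 = s\<^sup>2" "p * c + q * d = s * c"
  shows "(p = s \<and> q = 0) \<or> (p = s * (c\<^sup>2 - d\<^sup>2) \<and> q = 2 * s * c * d)"
proof -
  have "q * (q - 2 * s * c * d) = 0" using assms(2-4) by algebra
  then consider "q = 0" | "q = 2 * s * c * d" by auto
  then show ?thesis
  proof cases
    case 1
    with assms(1,4) show ?thesis by simp
  next
    case 2
    then have "c * p = c * (s * (c\<^sup>2 - d\<^sup>2))" using assms(2,4) by algebra
    with 2 assms(1) show ?thesis by simp
  qed
qed

lemma D_chi2_shift_le:
  fixes A U V s :: real
  assumes "U \<noteq> 0" and bound: "\<bar>A\<bar> + sqrt (U\<^sup>2 + V\<^sup>2) \<le> 1"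
  shows "D_chi2 (A + s * U) A \<le> s\<^sup>2 * (U\<^sup>2 / (U\<^sup>2 + V\<^sup>2))"
proof -
  define r where "r = sqrt (U\<^sup>2 + V\<^sup>2)"
  have r_pos: "0 < r" using assms(1) by (simp add: r_def sum_power2_gt_zero_iff)
  with bound have A: "\<bar>A\<bar> < 1" unfolding r_def by linarith
  have "r\<^sup>2 \<le> (1 - \<bar>A\<bar>)\<^sup>2" using bound r_pos unfolding r_def by (intro power_mono) auto
  also have "\<dots> \<le> 1 - A\<^sup>2"
  proof -
    have "\<bar>A\<bar> * \<bar>A\<bar> \<le> \<bar>A\<bar>" using A by (intro mult_right_le_one_le) auto
    then show ?thesis by (simp add: power2_eq_square algebra_simps)
  qed
  finally have "U\<^sup>2 + V\<^sup>2 \<le> 1 - A\<^sup>2" unfolding r_def by simp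
  then have "(s * U)\<^sup>2 / (1 - A\<^sup>2) \<le> (s * U)\<^sup>2 / (U\<^sup>2 + V\<^sup>2)"
    using assms(1) A by (intro divide_left_mono mult_pos_pos) (auto simp: sum_power2_gt_zero_iff abs_square_less_1)
  then show ?thesis unfolding D_chi2_eq[OF A] by (simp add: power_mult_distrib)
qed

lemma D_chi2_two_point_le:
  fixes A U V s c d y w :: real
  assumes "\<bar>s\<bar> \<le> 1" "c\<^sup>2 + d\<^sup>2 = 1" and bound: "\<bar>A\<bar> + sqrt (U\<^sup>2 + V\<^sup>2) \<le> 1"
    and y: "y = A + s * U" and w: "w = A + s * (c\<^sup>2 - d\<^sup>2) * U + 2 * s * c * d * V" and "y \<noteq> w"
  shows "\<bar>(y + w) / 2\<bar> < 1" and "((y - w) / 2)\<^sup>2 / (1 - ((y + w) / 2)\<^sup>2) \<le> s\<^sup>2 * d\<^sup>2"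
proof -
  define P where "P = c * U + d * V"
  define Q where "Q = d * U - c * V"
  define r where "r = sqrt (U\<^sup>2 + V\<^sup>2)"
  have diff: "(y - w) / 2 = s * d * Q" unfolding y w Q_def using assms(2) by algebra
  have mid: "(y + w) / 2 = A + s * c * P" unfolding y w P_def using assms(2) by algebra
  have PQ: "P\<^sup>2 + Q\<^sup>2 = U\<^sup>2 + V\<^sup>2" unfolding P_def Q_def using assms(2) by algebra
  have r: "0 \<le> r" "r\<^sup>2 = P\<^sup>2 + Q\<^sup>2" unfolding r_def PQ by simp_all
  have "P\<^sup>2 \<le> r\<^sup>2" using r(2) by simp
  then have "\<bar>P\<bar> \<le> r" using r(1) abs_le_square_iff[of P r] by simp
  have "c\<^sup>2 \<le> 1" using assms(2) zero_le_power2[of d] by linarith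
  then have "\<bar>c\<bar> \<le> 1" by (simp only: abs_square_le_1)
  then have "\<bar>s * c * P\<bar> \<le> \<bar>P\<bar>"
    using assms(1) by (simp add: abs_mult mult_le_one mult_left_le_one_le)
  then have "\<bar>(y + w) / 2\<bar> \<le> \<bar>A\<bar> + \<bar>P\<bar>" unfolding mid by linarith
  then have "((y + w) / 2)\<^sup>2 \<le> (\<bar>A\<bar> + \<bar>P\<bar>)\<^sup>2"
    using power_mono[OF _ abs_ge_zero, of _ _ 2] by (metis power2_abs)
  then have "((y + w) / 2)\<^sup>2 + Q\<^sup>2 \<le> (\<bar>A\<bar> + \<bar>P\<bar>)\<^sup>2 + Q\<^sup>2" by simp
  also have "\<dots> = A\<^sup>2 + 2 * \<bar>A\<bar> * \<bar>P\<bar> + r\<^sup>2"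
    using r by (simp add: power2_eq_square algebra_simps)
  also have "\<dots> \<le> (\<bar>A\<bar> + r)\<^sup>2"
  proof -
    have "\<bar>A\<bar> * \<bar>P\<bar> \<le> \<bar>A\<bar> * r" using \<open>\<bar>P\<bar> \<le> r\<close> by (simp add: mult_left_mono)
    then show ?thesis by (simp add: power2_eq_square algebra_simps)
  qed
  also have "\<dots> \<le> 1"
    using bound r(1) unfolding r_def[symmetric] by (simp add: power_le_one)
  finally have mid_Q: "((y + w) / 2)\<^sup>2 + Q\<^sup>2 \<le> 1" .
  from \<open>y \<noteq> w\<close> have "Q \<noteq> 0" using diff by auto
  then have Q: "0 < Q\<^sup>2" by simp
  with mid_Q have mid_lt: "((y + w) / 2)\<^sup>2 < 1" by linarith
  then show "\<bar>(y + w) / 2\<bar> < 1" by (simp only: abs_square_less_1)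
  have "((y - w) / 2)\<^sup>2 / (1 - ((y + w) / 2)\<^sup>2) \<le> (s * d)\<^sup>2 * Q\<^sup>2 / Q\<^sup>2"
    unfolding diff power_mult_distrib[of "s * d"] using mid_Q Q mid_lt
    by (intro divide_left_mono mult_pos_pos) auto
  then show "((y - w) / 2)\<^sup>2 / (1 - ((y + w) / 2)\<^sup>2) \<le> s\<^sup>2 * d\<^sup>2"
    using Q by (simp add: power_mult_distrib)
qed

(*
  S i models the conditional range of component i: every consistent state is a point (p, q) on
  the circle of radius s, observed through the affine functionals A + p U + q V and agreeing
  with b on the earlier indices; the given state is (s, 0). As long as all earlier U vanish,
  (p, q) |-> (-p, -q) preserves consistency, whence S_reflect.
*)
locale circle_conditioning =
  fixes lo hi :: nat and s :: real and A U V b :: "nat \<Rightarrow> real" and S :: "nat \<Rightarrow> real set"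
  assumes s_pos: "0 < s" and s_le_1: "s \<le> 1"
    and S_on_circle: "\<And>i x. i \<in> {lo..hi} \<Longrightarrow> x \<in> S i \<Longrightarrow> \<exists>p q. p\<^sup>2 + q\<^sup>2 = s\<^sup>2 \<and>
        (\<forall>j\<in>{lo..<i}. A j + p * U j + q * V j = b j) \<and> x = A i + p * U i + q * V i"
    and b_eq: "\<And>i. i \<in> {lo..hi} \<Longrightarrow> b i = A i + s * U i"
    and S_reflect: "\<And>i x. i \<in> {lo..hi} \<Longrightarrow> \<forall>j\<in>{lo..<i}. U j = 0 \<Longrightarrow> x \<in> S i \<Longrightarrow> 2 * A i - x \<in> S i"
    and b_mem_S: "\<And>i. i \<in> {lo..hi} \<Longrightarrow> b i \<in> S i"
    and bdd_above_S: "\<And>i. i \<in> {lo..hi} \<Longrightarrow> bdd_above (S i)"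
    and coeff_bound: "\<And>i. i \<in> {lo..hi} \<Longrightarrow> \<bar>A i\<bar> + sqrt ((U i)\<^sup>2 + (V i)\<^sup>2) \<le> 1"
begin

definition D_post :: "nat \<Rightarrow> real" where
  "D_post i = D_chi2 (b i) ((Sup (S i) + Inf (S i)) / 2)"

lemma D_post_eq_0_if_determined: "i \<in> {lo..hi} \<Longrightarrow> S i \<subseteq> {b i} \<Longrightarrow> D_post i = 0"
  unfolding D_post_def by (rule D_chi2_Sup_Inf_midpoint_singleton[OF b_mem_S])

lemma midpoint_eq_A:
  assumes "i \<in> {lo..hi}" "\<forall>j\<in>{lo..<i}. U j = 0"
  shows "(Sup (S i) + Inf (S i)) / 2 = A i"
  using b_mem_S[OF assms(1)] bdd_above_S[OF assms(1)] S_reflect[OF assms]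
  by (intro Sup_Inf_midpoint_eq_center) auto

lemma D_post_eq_0_before_first:
  assumes "i \<in> {lo..hi}" "\<forall>j\<in>{lo..i}. U j = 0"
  shows "D_post i = 0"
  using assms midpoint_eq_A[OF assms(1)] b_eq[OF assms(1)] D_chi2_self
  unfolding D_post_def by simp

lemma D_post_first_le:
  assumes "k \<in> {lo..hi}" "\<forall>j\<in>{lo..<k}. U j = 0" "U k \<noteq> 0"
  shows "D_post k \<le> s\<^sup>2 * ((U k)\<^sup>2 / ((U k)\<^sup>2 + (V k)\<^sup>2))"
  unfolding D_post_def midpoint_eq_A[OF assms(1,2)] b_eq[OF assms(1)]
  using D_chi2_shift_le[OF assms(3) coeff_bound[OF assms(1)]] .

end

(*
  k is the first index with U k /= 0 and (U k, V k) = r (c, d). Consistency at k cuts the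
  circle down to (s, 0) and its mirror image (s (c^2 - d^2), 2 s c d) in the line through (c, d).
*)
locale circle_conditioning_first = circle_conditioning +
  fixes k :: nat and r c d :: real
  assumes k_mem: "k \<in> {lo..hi}" and U_before_k: "\<forall>j\<in>{lo..<k}. U j = 0"
    and r_pos: "0 < r" and U_k: "U k = r * c" and V_k: "V k = r * d"
    and c_nonzero: "c \<noteq> 0" and cd_unit: "c\<^sup>2 + d\<^sup>2 = 1"
begin

definition reflected_obs :: "nat \<Rightarrow> real" where
  "reflected_obs i = A i + s * (c\<^sup>2 - d\<^sup>2) * U i + 2 * s * c * d * V i"

definition first_mismatch :: "nat \<Rightarrow> bool" where
  "first_mismatch i \<longleftrightarrow> reflected_obs i \<noteq> b i \<and> (\<forall>j\<in>{lo..<i}. reflected_obs j = b j)"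

lemma first_mismatch_unique: "first_mismatch i \<Longrightarrow> first_mismatch j \<Longrightarrow> lo \<le> i \<Longrightarrow> lo \<le> j \<Longrightarrow> i = j"
  unfolding first_mismatch_def by (metis atLeastLessThan_iff linorder_neqE_nat)

lemma S_after_first:
  assumes "k < i" "i \<le> hi" "x \<in> S i"
  shows "x = b i \<or> (x = reflected_obs i \<and> (\<forall>j\<in>{lo..<i}. reflected_obs j = b j))"
proof -
  have i: "i \<in> {lo..hi}" using assms(1,2) k_mem by auto
  obtain p q where circle: "p\<^sup>2 + q\<^sup>2 = s\<^sup>2"
    and consistent: "\<forall>j\<in>{lo..<i}. A j + p * U j + q * V j = b j" and x: "x = A i + p * U i + q * V i"
    using S_on_circle[OF i assms(3)] by blast
  have "A k + p * U k + q * V k = A k + s * U k"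
    using consistent b_eq[OF k_mem] k_mem assms(1) by auto
  then have "r * (p * c + q * d) = r * (s * c)" unfolding U_k V_k by (simp add: algebra_simps)
  then have "p * c + q * d = s * c" using r_pos by simp
  from circle_line_intersection[OF c_nonzero cd_unit circle this] show ?thesis
  proof
    assume "p = s \<and> q = 0"
    then show ?thesis using x b_eq[OF i] by simp
  next
    assume "p = s * (c\<^sup>2 - d\<^sup>2) \<and> q = 2 * s * c * d"
    then show ?thesis using x consistent unfolding reflected_obs_def by (simp add: mult.assoc)
  qed
qed

lemma D_post_after_first_le:
  assumes "k < i" "i \<le> hi"
  shows "D_post i \<le> (if first_mismatch i then s\<^sup>2 * d\<^sup>2 else 0)"
proof -
  have i: "i \<in> {lo..hi}" using assms k_mem by auto
  show ?thesis
  proof (cases "first_mismatch i")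
    case True
    then have "S i \<subseteq> {b i, reflected_obs i}" using S_after_first[OF assms] by blast
    moreover note two_point = D_chi2_two_point_le[OF _ cd_unit coeff_bound[OF i] b_eq[OF i] reflected_obs_def]
    moreover have "\<bar>s\<bar> \<le> 1" "b i \<noteq> reflected_obs i"
      using s_pos s_le_1 True unfolding first_mismatch_def by auto
    ultimately have "D_post i \<le> s\<^sup>2 * d\<^sup>2"
      unfolding D_post_def using D_chi2_Sup_Inf_midpoint_doubleton[OF b_mem_S[OF i]] by fastforce
    with True show ?thesis by simp
  next
    case False
    then have "S i \<subseteq> {b i}" using S_after_first[OF assms] unfolding first_mismatch_def by blast
    then show ?thesis using D_post_eq_0_if_determined[OF i] False by simp
  qed
qed

lemma sum_D_post_le: "(\<Sum>i=lo..hi. D_post i) \<le> s\<^sup>2"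
proof -
  have split: "{lo..hi} = {lo..k} \<union> {k<..hi}" "{lo..k} \<inter> {k<..hi} = {}" using k_mem by auto
  have "(\<Sum>i=lo..k. D_post i) \<le> s\<^sup>2 * c\<^sup>2"
  proof (rule sum_le_if_at_most_one[where P = "\<lambda>i. i = k"])
    fix i assume i: "i \<in> {lo..k}"
    have "(U k)\<^sup>2 / ((U k)\<^sup>2 + (V k)\<^sup>2) = c\<^sup>2"
      unfolding U_k V_k using r_pos cd_unit by (simp add: power_mult_distrib flip: distrib_left)
    then have "D_post k \<le> s\<^sup>2 * c\<^sup>2"
      using D_post_first_le[OF k_mem U_before_k] U_k r_pos c_nonzero by simp
    moreover have "D_post i = 0" if "i < k"
      using that i k_mem U_before_k by (intro D_post_eq_0_before_first) auto
    ultimately show "D_post i \<le> (if i = k then s\<^sup>2 * c\<^sup>2 else 0)" using i by auto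
  qed auto
  moreover have "(\<Sum>i\<in>{k<..hi}. D_post i) \<le> s\<^sup>2 * d\<^sup>2"
    using D_post_after_first_le first_mismatch_unique k_mem
    by (intro sum_le_if_at_most_one[where P = first_mismatch]) auto
  ultimately have "(\<Sum>i=lo..hi. D_post i) \<le> s\<^sup>2 * c\<^sup>2 + s\<^sup>2 * d\<^sup>2"
    unfolding split(1) by (subst sum.union_disjoint) (use split(2) in auto)
  then show ?thesis using cd_unit by (simp flip: distrib_left)
qed

end

context circle_conditioning
begin

theorem sum_D_post_le: "(\<Sum>i=lo..hi. D_post i) \<le> s\<^sup>2"
proof (cases "\<exists>i\<in>{lo..hi}. U i \<noteq> 0")
  case True
  then obtain k where k: "k \<in> {lo..hi}" "U k \<noteq> 0"
    and below: "\<And>j. j < k \<Longrightarrow> \<not> (j \<in> {lo..hi} \<and> U j \<noteq> 0)"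
    using exists_least_iff[of "\<lambda>i. i \<in> {lo..hi} \<and> U i \<noteq> 0"] by blast
  have least: "\<forall>j\<in>{lo..<k}. U j = 0" using below k(1) by auto
  define r where "r = sqrt ((U k)\<^sup>2 + (V k)\<^sup>2)"
  have r: "0 < r" "r\<^sup>2 = (U k)\<^sup>2 + (V k)\<^sup>2" using k(2) by (simp_all add: r_def sum_power2_gt_zero_iff)
  interpret first: circle_conditioning_first lo hi s A U V b S k r "U k / r" "V k / r"
    using k least r by unfold_locales (auto simp: power_divide simp flip: add_divide_distrib)
  show ?thesis by (rule first.sum_D_post_le)
next
  case False
  then have "D_post i = 0" if "i \<in> {lo..hi}" for i
    using that by (intro D_post_eq_0_before_first) auto
  then show ?thesis using s_pos by simp
qed

end

section \<open>Correlation matrices in a fixed frame\<close>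

definition corr_block :: "real \<Rightarrow> real \<Rightarrow> real^3^3" where
  "corr_block p q = vector [vector [1, 0, 0], vector [0, p, q], vector [0, q, - p]]"

lemma matrix_add_rdistrib: "(A + B) ** C = A ** C + B ** C"
  by (vector matrix_matrix_mult_def sum.distrib[symmetric] field_simps)

lemma matrix_mult_outer_prod_mult:
  fixes A B :: "real^3^3"
  shows "A ** outer_prod u v ** B = outer_prod (A *v u) (transpose B *v v)"
  by (simp add: vec_eq_iff matrix_matrix_mult_def matrix_vector_mult_def outer_prod_def transpose_def
      sum_3 algebra_simps)

lemma eq_corr_block:
  fixes X :: "real^3^3"
  assumes col: "X *v axis 1 1 = axis 1 1" and row: "transpose X *v axis 1 1 = axis 1 1"
    and gram: "X ** transpose X = s\<^sup>2 *\<^sub>R mat 1 + t *\<^sub>R outer_prod (axis 1 1) (axis 1 1)"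
    and det: "det X = - s\<^sup>2"
  shows "\<exists>p q. p\<^sup>2 + q\<^sup>2 = s\<^sup>2 \<and> X = corr_block p q"
proof -
  have c1: "X$1$1 = 1" "X$2$1 = 0" "X$3$1 = 0" using col
    by (simp_all add: matrix_vector_mult_def sum_3 vec_eq_iff forall_3 axis_def)
  have r1: "X$1$2 = 0" "X$1$3 = 0" using row
    by (simp_all add: matrix_vector_mult_def sum_3 vec_eq_iff forall_3 axis_def transpose_def)
  define p where "p = X$2$2"
  define q where "q = X$2$3"
  have "(X ** transpose X)$2$2 = s\<^sup>2" "(X ** transpose X)$3$3 = s\<^sup>2" "(X ** transpose X)$2$3 = 0"
    unfolding gram by (simp_all add: mat_def outer_prod_def axis_def)
  then have pq: "p\<^sup>2 + q\<^sup>2 = s\<^sup>2" and "(X$3$2)\<^sup>2 + (X$3$3)\<^sup>2 = s\<^sup>2" "p * X$3$2 + q * X$3$3 = 0"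
    using c1 by (simp_all add: matrix_matrix_mult_def sum_3 transpose_def power2_eq_square p_def q_def)
  moreover have "p * X$3$3 - q * X$3$2 = - s\<^sup>2" using det c1 r1 by (simp add: det_3 p_def q_def)
  ultimately have "(X$3$2 - q)\<^sup>2 + (X$3$3 + p)\<^sup>2 = 0" by algebra
  then have "X$3$2 = q" "X$3$3 = - p" by (simp_all add: sum_power2_eq_zero_iff)
  with c1 r1 have "X = corr_block p q"
    unfolding corr_block_def p_def q_def by (simp add: vec_eq_iff forall_3)
  with pq show ?thesis by blast
qed

lemma eq_rotated_corr_block:
  fixes O1 O2 C :: "real^3^3"
  assumes O1: "orthogonal_matrix O1" "det O1 = 1" and O2: "orthogonal_matrix O2" "det O2 = 1"
    and "transpose C *v (O1 *v axis 1 1) = O2 *v axis 1 1" and "C *v (O2 *v axis 1 1) = O1 *v axis 1 1"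
    and gram: "C ** transpose C = s\<^sup>2 *\<^sub>R mat 1 + t *\<^sub>R outer_prod (O1 *v axis 1 1) (O1 *v axis 1 1)"
    and "det C = - s\<^sup>2"
  shows "\<exists>p q. p\<^sup>2 + q\<^sup>2 = s\<^sup>2 \<and> C = O1 ** corr_block p q ** transpose O2"
proof -
  have inv1: "transpose O1 ** O1 = mat 1" "O1 ** transpose O1 = mat 1"
    and inv2: "transpose O2 ** O2 = mat 1" "O2 ** transpose O2 = mat 1"
    using O1 O2 unfolding orthogonal_matrix_def by auto
  define X where "X = transpose O1 ** C ** O2"
  have "O1 ** X ** transpose O2 = (O1 ** transpose O1) ** C ** (O2 ** transpose O2)"
    unfolding X_def by (simp only: matrix_mul_assoc)
  then have C: "C = O1 ** X ** transpose O2" by (simp add: inv1 inv2)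
  have tX: "transpose X = transpose O2 ** transpose C ** O1"
    unfolding X_def by (simp add: matrix_transpose_mul matrix_mul_assoc)
  have "X *v axis 1 1 = transpose O1 *v (C *v (O2 *v axis 1 1))"
    unfolding X_def by (simp only: matrix_mul_assoc matrix_vector_mul_assoc)
  also have "\<dots> = axis 1 1"
    unfolding assms(6) by (simp only: matrix_vector_mul_assoc inv1 matrix_vector_mul_lid)
  finally have "X *v axis 1 1 = axis 1 1" .
  moreover have "transpose X *v axis 1 1 = transpose O2 *v (transpose C *v (O1 *v axis 1 1))"
    unfolding tX by (simp only: matrix_mul_assoc matrix_vector_mul_assoc)
  then have "transpose X *v axis 1 1 = axis 1 1"
    unfolding assms(5) by (simp only: matrix_vector_mul_assoc inv2 matrix_vector_mul_lid)
  moreover have "X ** transpose X = s\<^sup>2 *\<^sub>R mat 1 + t *\<^sub>R outer_prod (axis 1 1) (axis 1 1)"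
  proof -
    have "X ** transpose X = transpose O1 ** (C ** (O2 ** transpose O2) ** transpose C) ** O1"
      unfolding tX unfolding X_def by (simp only: matrix_mul_assoc)
    also have "\<dots> = transpose O1 ** (C ** transpose C) ** O1"
      by (simp add: inv2)
    also have "\<dots> = s\<^sup>2 *\<^sub>R (transpose O1 ** O1) +
        t *\<^sub>R (transpose O1 ** outer_prod (O1 *v axis 1 1) (O1 *v axis 1 1) ** O1)"
      unfolding gram
      by (simp only: matrix_add_ldistrib matrix_add_rdistrib matrix_scalar_ac
          scalar_matrix_assoc[symmetric] matrix_mul_rid)
    also have "\<dots> = s\<^sup>2 *\<^sub>R mat 1 + t *\<^sub>R outer_prod (axis 1 1) (axis 1 1)"
      unfolding matrix_mult_outer_prod_mult transpose_transpose
      by (simp only: inv1 matrix_vector_mul_assoc matrix_vector_mul_lid)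
    finally show ?thesis .
  qed
  moreover have "det X = - s\<^sup>2"
    unfolding X_def using O1 O2 assms(8) by (simp add: det_mul det_transpose)
  ultimately show ?thesis using eq_corr_block C by blast
qed

definition corr_row :: "nat \<Rightarrow> 3" where
  "corr_row i = (if i \<le> 10 then 1 else if i \<le> 13 then 2 else 3)"

definition corr_col :: "nat \<Rightarrow> 3" where
  "corr_col i = (if i \<in> {8, 11, 14} then 1 else if i \<in> {9, 12, 15} then 2 else 3)"

lemma bloch_eq_corr_mat_entry:
  assumes "i \<in> {8..16}" shows "bloch \<phi> i = corr_mat \<phi> $ corr_row i $ corr_col i"
proof -
  from assms have "i \<in> {8, 9, 10, 11, 12, 13, 14, 15, 16}" by auto
  then show ?thesis by (auto simp: corr_mat_def corr_row_def corr_col_def)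
qed

lemma rotated_corr_block_entry:
  "(O1 ** corr_block p q ** transpose O2)$j$k = O1$j$1 * O2$k$1 +
     p * (O1$j$2 * O2$k$2 - O1$j$3 * O2$k$3) + q * (O1$j$2 * O2$k$3 + O1$j$3 * O2$k$2)"
  by (simp add: matrix_matrix_mult_def sum_3 transpose_def corr_block_def algebra_simps)

lemma orthogonal_matrix_row_norm:
  assumes "orthogonal_matrix (Q::real^3^3)" shows "(Q$j$1)\<^sup>2 + (Q$j$2)\<^sup>2 + (Q$j$3)\<^sup>2 = 1"
proof -
  have "(Q ** transpose Q)$j$j = 1" using assms unfolding orthogonal_matrix_def by (simp add: mat_def)
  then show ?thesis by (simp add: matrix_matrix_mult_def sum_3 transpose_def power2_eq_square)
qed

lemma orthogonal_matrix_column_norm: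
  assumes "orthogonal_matrix (Q::real^3^3)" shows "(Q *v axis j 1) \<bullet> (Q *v axis j 1) = 1"
proof -
  have "orthogonal_transformation ((*v) Q)"
    using assms by (simp add: orthogonal_transformation_matrix matrix_of_matrix_vector_mul)
  then have "norm (Q *v axis j 1) = 1" by (simp add: orthogonal_transformation norm_axis_1)
  then show ?thesis by (simp flip: power2_norm_eq_inner)
qed

lemma abs_mult_add_sqrt_le_1:
  fixes a e f b g h :: real
  assumes "a\<^sup>2 + e\<^sup>2 + f\<^sup>2 = 1" "b\<^sup>2 + g\<^sup>2 + h\<^sup>2 = 1"
  shows "\<bar>a * b\<bar> + sqrt ((e * g - f * h)\<^sup>2 + (e * h + f * g)\<^sup>2) \<le> 1"
proof -
  have ef: "e\<^sup>2 + f\<^sup>2 = 1 - a\<^sup>2" and gh: "g\<^sup>2 + h\<^sup>2 = 1 - b\<^sup>2" using assms by linarith+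
  have ra: "0 \<le> 1 - a\<^sup>2" and rb: "0 \<le> 1 - b\<^sup>2"
    unfolding ef[symmetric] gh[symmetric] by simp_all
  define ra where "ra = sqrt (1 - a\<^sup>2)"
  define rb where "rb = sqrt (1 - b\<^sup>2)"
  have "(e * g - f * h)\<^sup>2 + (e * h + f * g)\<^sup>2 = (e\<^sup>2 + f\<^sup>2) * (g\<^sup>2 + h\<^sup>2)" by algebra
  also have "\<dots> = (1 - a\<^sup>2) * (1 - b\<^sup>2)" unfolding ef gh ..
  finally have sq: "sqrt ((e * g - f * h)\<^sup>2 + (e * h + f * g)\<^sup>2) = ra * rb"
    unfolding ra_def rb_def by (simp add: real_sqrt_mult)
  have "(\<bar>a\<bar> * \<bar>b\<bar> + ra * rb)\<^sup>2 + (\<bar>a\<bar> * rb - ra * \<bar>b\<bar>)\<^sup>2 = (\<bar>a\<bar>\<^sup>2 + ra\<^sup>2) * (\<bar>b\<bar>\<^sup>2 + rb\<^sup>2)"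
    by algebra
  also have "\<dots> = 1" using ra rb unfolding ra_def rb_def by simp
  finally have "(\<bar>a\<bar> * \<bar>b\<bar> + ra * rb)\<^sup>2 \<le> 1\<^sup>2" by (metis le_add_same_cancel1 power_one zero_le_power2)
  then have "\<bar>a\<bar> * \<bar>b\<bar> + ra * rb \<le> 1" by (rule power2_le_imp_le) simp
  then show ?thesis unfolding sq by (simp add: abs_mult)
qed

locale schmidt_frame =
  fixes O1 O2 :: "real^3^3" and \<mu> s :: real
  assumes orth1: "orthogonal_matrix O1" and det1: "det O1 = 1"
    and orth2: "orthogonal_matrix O2" and det2: "det O2 = 1"
    and mu_nonzero: "\<mu> \<noteq> 0" and mu_s: "\<mu>\<^sup>2 + s\<^sup>2 = 1"
begin

abbreviation n1 :: "real^3" where "n1 \<equiv> O1 *v axis 1 1"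
abbreviation n2 :: "real^3" where "n2 \<equiv> O2 *v axis 1 1"

definition in_frame :: "(nat \<Rightarrow> complex) \<Rightarrow> bool" where
  "in_frame \<phi> \<longleftrightarrow> pure_state \<phi> \<and> alpha_vec \<phi> = \<mu> *\<^sub>R n1 \<and> beta_vec \<phi> = \<mu> *\<^sub>R n2"

definition coeff_A :: "nat \<Rightarrow> real" where
  "coeff_A i = O1$corr_row i$1 * O2$corr_col i$1"

definition coeff_U :: "nat \<Rightarrow> real" where
  "coeff_U i = O1$corr_row i$2 * O2$corr_col i$2 - O1$corr_row i$3 * O2$corr_col i$3"

definition coeff_V :: "nat \<Rightarrow> real" where
  "coeff_V i = O1$corr_row i$2 * O2$corr_col i$3 + O1$corr_row i$3 * O2$corr_col i$2"

lemma corr_mat_in_frame: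
  assumes "in_frame \<phi>"
  shows "\<exists>p q. p\<^sup>2 + q\<^sup>2 = s\<^sup>2 \<and> corr_mat \<phi> = O1 ** corr_block p q ** transpose O2"
proof -
  from assms have pure: "bloch \<phi> 1 = 1" and \<alpha>: "alpha_vec \<phi> = \<mu> *\<^sub>R n1" and \<beta>: "beta_vec \<phi> = \<mu> *\<^sub>R n2"
    unfolding in_frame_def pure_state_iff_bloch_1 by auto
  have \<alpha>\<alpha>: "alpha_vec \<phi> \<bullet> alpha_vec \<phi> = \<mu>\<^sup>2"
    unfolding \<alpha> using orthogonal_matrix_column_norm[OF orth1] by (simp add: power2_eq_square)
  show ?thesis
  proof (rule eq_rotated_corr_block[OF orth1 det1 orth2 det2])
    show "transpose (corr_mat \<phi>) *v n1 = n2"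
      using transpose_corr_mat_mult_alpha[of \<phi>] mu_nonzero unfolding pure \<alpha> \<beta>
      by (simp add: matrix_vector_mult_scaleR)
    show "corr_mat \<phi> *v n2 = n1"
      using corr_mat_mult_beta[of \<phi>] mu_nonzero unfolding pure \<alpha> \<beta>
      by (simp add: matrix_vector_mult_scaleR)
    have "outer_prod (alpha_vec \<phi>) (alpha_vec \<phi>) = \<mu>\<^sup>2 *\<^sub>R outer_prod n1 n1"
      unfolding \<alpha> by (simp add: outer_prod_def vec_eq_iff power2_eq_square)
    moreover have "(bloch \<phi> 1)\<^sup>2 - alpha_vec \<phi> \<bullet> alpha_vec \<phi> = s\<^sup>2" using pure \<alpha>\<alpha> mu_s by simp
    ultimately show "corr_mat \<phi> ** transpose (corr_mat \<phi>) = s\<^sup>2 *\<^sub>R mat 1 + \<mu>\<^sup>2 *\<^sub>R outer_prod n1 n1"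
      using corr_mat_mult_transpose[of \<phi>] by simp
    show "det (corr_mat \<phi>) = - s\<^sup>2"
      using det_corr_mat[of \<phi>] mu_s unfolding pure \<alpha>\<alpha> by simp
  qed
qed

lemma pauli_first_in_frame:
  assumes "in_frame \<phi>"
  shows "in_frame (pauli_first n1 \<phi>)"
    and "corr_mat (pauli_first n1 \<phi>) = 2 *\<^sub>R outer_prod n1 n2 - corr_mat \<phi>"
proof -
  from assms have pure: "bloch \<phi> 1 = 1" and \<alpha>: "alpha_vec \<phi> = \<mu> *\<^sub>R n1" and \<beta>: "beta_vec \<phi> = \<mu> *\<^sub>R n2"
    unfolding in_frame_def pure_state_iff_bloch_1 by auto
  have n1: "n1 \<bullet> n1 = 1" by (rule orthogonal_matrix_column_norm[OF orth1])
  show "in_frame (pauli_first n1 \<phi>)"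
    unfolding in_frame_def pure_state_iff_bloch_1 bloch_pauli_first_1 alpha_vec_pauli_first
      beta_vec_pauli_first \<alpha> \<beta> pure
    by (simp add: n1 flip: scaleR_left_diff_distrib)
  have "transpose (corr_mat \<phi>) *v n1 = n2"
    using transpose_corr_mat_mult_alpha[of \<phi>] mu_nonzero unfolding pure \<alpha> \<beta>
    by (simp add: matrix_vector_mult_scaleR)
  then show "corr_mat (pauli_first n1 \<phi>) = 2 *\<^sub>R outer_prod n1 n2 - corr_mat \<phi>"
    unfolding corr_mat_pauli_first n1 by simp
qed

lemma bloch_eq_if_in_frame:
  assumes "in_frame \<phi>" "in_frame \<psi>" "j \<in> {1..7}"
  shows "bloch \<phi> j = bloch \<psi> j"
proof -
  from assms(3) have "j \<in> {1, 2, 3, 4, 5, 6, 7}" by auto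
  with assms(1,2) show ?thesis
    unfolding in_frame_def pure_state_iff_bloch_1 alpha_vec_def beta_vec_def
    by (auto simp: vec_eq_iff forall_3)
qed

lemma in_frame_if_agrees:
  assumes "in_frame \<psi>" "pure_state \<phi>" "\<forall>j\<in>{1..<i}. bloch \<phi> j = bloch \<psi> j" "8 \<le> i"
  shows "in_frame \<phi>"
proof -
  have "alpha_vec \<phi> = alpha_vec \<psi>" "beta_vec \<phi> = beta_vec \<psi>"
    using assms(3,4) unfolding alpha_vec_def beta_vec_def by simp_all
  with assms(1,2) show ?thesis unfolding in_frame_def by simp
qed

lemma bloch_in_rotated_block:
  assumes "corr_mat \<phi> = O1 ** corr_block p q ** transpose O2" "i \<in> {8..16}"
  shows "bloch \<phi> i = coeff_A i + p * coeff_U i + q * coeff_V i"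
  unfolding bloch_eq_corr_mat_entry[OF assms(2)] assms(1) rotated_corr_block_entry
    coeff_A_def coeff_U_def coeff_V_def ..

lemma coeff_bound: "\<bar>coeff_A i\<bar> + sqrt ((coeff_U i)\<^sup>2 + (coeff_V i)\<^sup>2) \<le> 1"
  unfolding coeff_A_def coeff_U_def coeff_V_def
  by (rule abs_mult_add_sqrt_le_1[OF orthogonal_matrix_row_norm[OF orth1] orthogonal_matrix_row_norm[OF orth2]])

end

context schmidt_frame
begin

lemma cond_vals_on_circle:
  assumes "in_frame \<psi>" "i \<in> {8..16}" "x \<in> cond_vals (bloch \<psi>) i"
  shows "\<exists>p q. p\<^sup>2 + q\<^sup>2 = s\<^sup>2 \<and> (\<forall>j\<in>{8..<i}. coeff_A j + p * coeff_U j + q * coeff_V j = bloch \<psi> j)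
    \<and> x = coeff_A i + p * coeff_U i + q * coeff_V i"
proof -
  from assms(3) obtain \<phi> where \<phi>: "pure_state \<phi>" "\<forall>j\<in>{1..<i}. bloch \<phi> j = bloch \<psi> j"
    and x: "x = bloch \<phi> i"
    unfolding cond_vals_def by blast
  have "in_frame \<phi>" using in_frame_if_agrees[OF assms(1) \<phi>] assms(2) by simp
  then obtain p q where "p\<^sup>2 + q\<^sup>2 = s\<^sup>2" and C: "corr_mat \<phi> = O1 ** corr_block p q ** transpose O2"
    using corr_mat_in_frame by blast
  moreover have "coeff_A j + p * coeff_U j + q * coeff_V j = bloch \<psi> j" if "j \<in> {8..<i}" for j
  proof -
    from that assms(2) have j: "j \<in> {1..<i}" "j \<in> {8..16}" by auto
    show ?thesis using bspec[OF \<phi>(2) j(1)] bloch_in_rotated_block[OF C j(2)] by simp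
  qed
  moreover have "x = coeff_A i + p * coeff_U i + q * coeff_V i"
    using x bloch_in_rotated_block[OF C assms(2)] by simp
  ultimately show ?thesis by blast
qed

(* The reflection maps C to 2 n1 n2^T - C, that is (p, q) to (-p, -q). *)
lemma cond_vals_reflect:
  assumes "in_frame \<psi>" and \<psi>: "corr_mat \<psi> = O1 ** corr_block s 0 ** transpose O2"
    and "i \<in> {8..16}" "\<forall>j\<in>{8..<i}. coeff_U j = 0" "x \<in> cond_vals (bloch \<psi>) i"
  shows "2 * coeff_A i - x \<in> cond_vals (bloch \<psi>) i"
proof (rule reflect_mem_cond_vals[OF _ assms(5)])
  fix \<phi> assume \<phi>: "pure_state \<phi>" "\<forall>j\<in>{1..<i}. bloch \<phi> j = bloch \<psi> j"
  have "in_frame \<phi>" using in_frame_if_agrees[OF assms(1) \<phi>] assms(3) by simp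
  note reflected = pauli_first_in_frame[OF this]
  have entry: "bloch (pauli_first n1 \<phi>) j = 2 * coeff_A j - bloch \<phi> j" if "j \<in> {8..16}" for j
    unfolding bloch_eq_corr_mat_entry[OF that] reflected(2) coeff_A_def
    by (simp add: outer_prod_def matrix_vector_mult_def sum_3 axis_def)
  have "bloch (pauli_first n1 \<phi>) j = bloch \<psi> j" if "j \<in> {1..<i}" for j
  proof (cases "j \<le> 7")
    case True
    with that show ?thesis using bloch_eq_if_in_frame[OF reflected(1) assms(1)] by simp
  next
    case False
    with that assms(3) have "j \<in> {8..16}" "j \<in> {8..<i}" by auto
    then show ?thesis
      using entry \<phi>(2) that bloch_in_rotated_block[OF \<psi>] assms(4) by simp
  qed
  then show "pure_state (pauli_first n1 \<phi>) \<and> (\<forall>j\<in>{1..<i}. bloch (pauli_first n1 \<phi>) j = bloch \<psi> j)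
      \<and> bloch (pauli_first n1 \<phi>) i = 2 * coeff_A i - bloch \<phi> i"
    using reflected(1) entry[OF assms(3)] unfolding in_frame_def by blast
qed

theorem circle_conditioning_cond_vals:
  assumes "in_frame \<psi>" and \<psi>: "corr_mat \<psi> = O1 ** corr_block s 0 ** transpose O2" and "0 < s"
  shows "circle_conditioning 8 16 s coeff_A coeff_U coeff_V (bloch \<psi>) (cond_vals (bloch \<psi>))"
proof
  have "s\<^sup>2 \<le> 1" using mu_s zero_le_power2[of \<mu>] by linarith
  then show "s \<le> 1" using assms(3) by (simp add: abs_square_le_1)
  show "\<And>i. i \<in> {8..16} \<Longrightarrow> bloch \<psi> i = coeff_A i + s * coeff_U i"
    using bloch_in_rotated_block[OF \<psi>] by simp
  show "\<And>i. bloch \<psi> i \<in> cond_vals (bloch \<psi>) i"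
    using assms(1) unfolding in_frame_def by (blast intro: bloch_mem_cond_vals)
qed (use assms cond_vals_on_circle cond_vals_reflect bdd_above_cond_vals coeff_bound in auto)

lemma sum_D_chi2_post_corr_le:
  assumes "in_frame \<psi>" "corr_mat \<psi> = O1 ** corr_block s 0 ** transpose O2" "0 < s"
  shows "(\<Sum>i=8..16. D_chi2 (bloch \<psi> i) (h_mid (bloch \<psi>) i)) \<le> s\<^sup>2"
proof -
  interpret circle_conditioning 8 16 s coeff_A coeff_U coeff_V "bloch \<psi>" "cond_vals (bloch \<psi>)"
    by (rule circle_conditioning_cond_vals[OF assms])
  show ?thesis using sum_D_post_le unfolding D_post_def h_mid_def b_max_def b_min_def .
qed

lemma sum_D_chi2_post_local_le:
  assumes "in_frame \<psi>"
  shows "(\<Sum>i=2..7. D_chi2 (bloch \<psi> i) (h_mid (bloch \<psi>) i)) \<le> 2 * \<mu>\<^sup>2"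
proof -
  from assms have "pure_state \<psi>" "alpha_vec \<psi> = \<mu> *\<^sub>R n1" "beta_vec \<psi> = \<mu> *\<^sub>R n2"
    unfolding in_frame_def by auto
  then show ?thesis
    using sum_D_chi2_post_alpha_beta_le[of \<psi>] orthogonal_matrix_column_norm[OF orth1, of 1]
      orthogonal_matrix_column_norm[OF orth2, of 1]
    by (simp add: power2_eq_square)
qed

end

lemma I_chi2_post_split:
  "I_chi2_post b = (\<Sum>i=2..7. D_chi2 (b i) (h_mid b i)) + (\<Sum>i=8..16. D_chi2 (b i) (h_mid b i))"
  unfolding I_chi2_post_def using sum.ub_add_nat[of 2 7 _ 9] by simp

lemma sin_pos_of_abs_cos_lt_1:
  assumes "0 \<le> \<theta>" "\<theta> \<le> pi" "\<bar>cos \<theta>\<bar> < 1"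
  shows "0 < sin \<theta>"
proof -
  have "0 < (sin \<theta>)\<^sup>2" using assms(3) by (simp add: sin_squared_eq abs_square_less_1)
  moreover have "0 \<le> sin \<theta>" using assms(1,2) by (rule sin_ge_zero)
  ultimately show ?thesis by (simp add: less_le)
qed

theorem lemma5:
  fixes \<psi> :: "nat \<Rightarrow> complex" and \<theta> :: real and O1 O2 :: "real^3^3"
  assumes "pure_state \<psi>"
    and "0 \<le> \<theta>" and "\<theta> \<le> pi / 2"
    and "orthogonal_matrix O1" and "det O1 = 1"
    and "orthogonal_matrix O2" and "det O2 = 1"
    and "alpha_vec \<psi> = O1 *v vector [cos \<theta>, 0, 0]"
    and "beta_vec \<psi> = O2 *v vector [cos \<theta>, 0, 0]"
    and "corr_mat \<psi> = O1 ** diag3 1 (sin \<theta>) (- sin \<theta>) ** transpose O2"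
    and "0 < \<bar>cos \<theta>\<bar>" and "\<bar>cos \<theta>\<bar> < 1"
  shows "I_chi2_post (bloch \<psi>) < 2"
proof -
  have cos_sin: "(cos \<theta>)\<^sup>2 + (sin \<theta>)\<^sup>2 = 1" by simp
  interpret schmidt_frame O1 O2 "cos \<theta>" "sin \<theta>"
    using assms(4-7,11) cos_sin by unfold_locales auto
  have "vector [cos \<theta>, 0, 0] = cos \<theta> *\<^sub>R (axis 1 1 :: real^3)"
    by (simp add: vec_eq_iff forall_3 axis_def)
  then have frame: "in_frame \<psi>"
    using assms(1,8,9) unfolding in_frame_def by (simp add: matrix_vector_mult_scaleR)
  have "diag3 1 (sin \<theta>) (- sin \<theta>) = corr_block (sin \<theta>) 0"
    by (simp add: diag3_def corr_block_def)
  moreover have "0 < sin \<theta>" using assms(2,3,12) by (intro sin_pos_of_abs_cos_lt_1) auto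
  ultimately have "(\<Sum>i=8..16. D_chi2 (bloch \<psi> i) (h_mid (bloch \<psi>) i)) \<le> (sin \<theta>)\<^sup>2"
    using sum_D_chi2_post_corr_le[OF frame] assms(10) by simp
  moreover have "(cos \<theta>)\<^sup>2 < 1" using assms(12) by (simp add: abs_square_less_1)
  ultimately show ?thesis
    using I_chi2_post_split[of "bloch \<psi>"] sum_D_chi2_post_local_le[OF frame] cos_sin by linarith
qed

end
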